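(* Let $A$ be a synaptic algebra and $p,q\in P$. Let $r_p:=p\wedge(p^{\perp}\vee q)\wedge(p^{\perp}\vee q^{\perp})$, $r_{p^{\perp}}:=p^{\perp}\wedge(p\vee q)\wedge(p\vee q^{\perp})$, $r_q:=q\wedge(p\vee q^{\perp})\wedge(p^{\perp}\vee q^{\perp})$, $r_{q^{\perp}}:=q^{\perp}\wedge(p\vee q)\wedge(p^{\perp}\vee q)$, and $r:=[p,q]:=(p\vee q)\wedge(p\vee q^{\perp})\wedge(p^{\perp}\vee q)\wedge(p^{\perp}\vee q^{\perp})$ (so $r=r_p\oplus r_{p^{\perp}}=r_q\oplus r_{q^{\perp}}$). Then: (i) $pCq$ iff $r=0$; (ii) $pr_p=r_pp=r_p$, $pr_{p^{\perp}}=r_{p^{\perp}}p=0$, and $pr=rp=p\wedge r=r_p$; (iii) $p^{\perp}r_p=r_pp^{\perp}=0$, $p^{\perp}r_{p^{\perp}}=r_{p^{\perp}}p^{\perp}=r_{p^{\perp}}$, and $p^{\perp}r=rp^{\perp}=p^{\perp}\wedge r=r_{p^{\perp}}$; (iv) $qr_q=r_qq=r_q$, $qr_{q^{\perp}}=r_{q^{\perp}}q=0$, and $qr=rq=q\wedge r=r_q$; (v) $q^{\perp}r_q=r_qq^{\perp}=0$, $q^{\perp}r_{q^{\perp}}=r_{q^{\perp}}q^{\perp}=r_{q^{\perp}}$, and $q^{\perp}r=rq^{\perp}=q^{\perp}\wedge r=r_{q^{\perp}}$; (vi) $p,p^{\perp},q,q^{\perp}$ commute with $r$; (vii) $r_p$,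 $r_{p^{\perp}}$, $r_p^{\perp}$, $r_q$, $r_{q^{\perp}}$, $r_q^{\perp}$ commute with $r$; (viii) $r_p=p\wedge r=pr=rp$, $r_{p^{\perp}}=p^{\perp}\wedge r=p^{\perp}r=rp^{\perp}$, $r_q=q\wedge r=qr=rq$, and $r_{q^{\perp}}=q^{\perp}\wedge r=q^{\perp}r=rq^{\perp}$.
   Context: Synaptic algebra (Foulis): $R$ is a real linear associative algebra with unit $1$, and $A\subseteq R$ is a real linear subspace with $1\in A$. For $a,b\in A$ write $aCb$ iff $ab=ba$; $C(a):=\{b\in A: aCb\}$; $CC(a):=\{b\in A: bCd \text{ for all } d\in C(a)\}$. $A$ is a synaptic algebra with enveloping algebra $R$ iff: (SA1) $A$ is a partially ordered archimedean real linear space with positive cone $A^+$, $1$ is an order unit, $\|\cdot\|$ the order-unit norm; (SA2) $a\in A\Rightarrow a^2\in A^+$; (SA3) $a,b\in A^+\Rightarrow aba\in A^+$; (SA4) if $a\in A$, $b\in A^+$, $aba=0$ then $ab=ba=0$; (SA5) if $a\in A^+$ there is $b\in A^+\cap CC(a)$ with $b^2=a$; (SA6) for $a\in A$ there is $p=p^2\in A$ with $ab=0\Leftrightarrow pb=0$ for all $b\in A$; (SA7) if $1\le a$ there is $b\in A$ with $ab=ba=1$; (SA8) if $a,b\in A$, $a_1\le a_2\le\cdots$ are pairwise commuting elements of $C(b)$ with $\|a-a_n\|\to0$, then $a\in C(b)$. $A$ is nondegenerate. $P:=\{p\in A:p=p^2\}$ with the order inherited from $A$ is an orthomodular lattice with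 orthocomplement $p^{\perp}:=1-p$, meet $\wedge$, join $\vee$; $\oplus$ denotes the sum of orthogonal projections. *)

theory Defs
  imports Complex_Main
begin

text \<open>The enveloping algebra R is the ambient type
 'a :: real_algebra_1 (a real linear associative algebra with unit 1, 0 \<noteq> 1).
 A synaptic algebra is given by the carrier A \<subseteq> R together with its positive cone Apos.\<close>

definition sa_le :: "'a::real_algebra_1 set \<Rightarrow> 'a \<Rightarrow> 'a \<Rightarrow> bool" where
  "sa_le Apos a b \<longleftrightarrow> b - a \<in> Apos"

definition ou_norm :: "'a::real_algebra_1 set \<Rightarrow> 'a \<Rightarrow> real" where
  "ou_norm Apos a = Inf {l::real. 0 \<le> l \<and> sa_le Apos (- (l *\<^sub>R 1)) a \<and> sa_le Apos a (l *\<^sub>R 1)}"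

definition commutant :: "'a::real_algebra_1 set \<Rightarrow> 'a \<Rightarrow> 'a set" where
  "commutant A a = {b \<in> A. a * b = b * a}"

definition bicommutant :: "'a::real_algebra_1 set \<Rightarrow> 'a \<Rightarrow> 'a set" where
  "bicommutant A a = {b \<in> A. \<forall>d \<in> commutant A a. b * d = d * b}"

definition synaptic_algebra :: "'a::real_algebra_1 set \<Rightarrow> 'a set \<Rightarrow> bool" where
  "synaptic_algebra A Apos \<longleftrightarrow>
     \<comment> \<open>A is a real linear subspace of R containing 1\<close>
     0 \<in> A \<and> 1 \<in> A \<and> (\<forall>a\<in>A. \<forall>b\<in>A. a + b \<in> A) \<and> (\<forall>c::real. \<forall>a\<in>A. c *\<^sub>R a \<in> A) \<and>
     \<comment> \<open>SA1: partially ordered (positive cone), archimedean, 1 an order unit\<close>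
     Apos \<subseteq> A \<and> 0 \<in> Apos \<and> (\<forall>a\<in>Apos. \<forall>b\<in>Apos. a + b \<in> Apos) \<and>
     (\<forall>c::real. \<forall>a\<in>Apos. 0 \<le> c \<longrightarrow> c *\<^sub>R a \<in> Apos) \<and>
     (\<forall>a\<in>Apos. - a \<in> Apos \<longrightarrow> a = 0) \<and>
     (\<forall>a\<in>A. \<forall>b\<in>A. (\<forall>n::nat. sa_le Apos (of_nat n *\<^sub>R a) b) \<longrightarrow> sa_le Apos a 0) \<and>
     (\<forall>a\<in>A. \<exists>n::nat. sa_le Apos a (of_nat n *\<^sub>R 1)) \<and>
     \<comment> \<open>SA2\<close>
     (\<forall>a\<in>A. a * a \<in> Apos) \<and>
     \<comment> \<open>SA3\<close>
     (\<forall>a\<in>Apos. \<forall>b\<in>Apos. a * b * a \<in> Apos) \<and>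
     \<comment> \<open>SA4\<close>
     (\<forall>a\<in>A. \<forall>b\<in>Apos. a * b * a = 0 \<longrightarrow> a * b = 0 \<and> b * a = 0) \<and>
     \<comment> \<open>SA5\<close>
     (\<forall>a\<in>Apos. \<exists>b\<in>Apos \<inter> bicommutant A a. b * b = a) \<and>
     \<comment> \<open>SA6\<close>
     (\<forall>a\<in>A. \<exists>p\<in>A. p * p = p \<and> (\<forall>b\<in>A. a * b = 0 \<longleftrightarrow> p * b = 0)) \<and>
     \<comment> \<open>SA7\<close>
     (\<forall>a\<in>A. sa_le Apos 1 a \<longrightarrow> (\<exists>b\<in>A. a * b = 1 \<and> b * a = 1)) \<and>
     \<comment> \<open>SA8\<close>
     (\<forall>a\<in>A. \<forall>b\<in>A. \<forall>s::nat \<Rightarrow> 'a.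
        (\<forall>n. s n \<in> commutant A b) \<and> (\<forall>m n. s m * s n = s n * s m) \<and>
        (\<forall>n. sa_le Apos (s n) (s (Suc n))) \<and>
        ((\<lambda>n. ou_norm Apos (a - s n)) \<longlonglongrightarrow> 0)
        \<longrightarrow> a \<in> commutant A b)"

definition projections :: "'a::real_algebra_1 set \<Rightarrow> 'a set" where
  "projections A = {p \<in> A. p * p = p}"

definition perp :: "'a::real_algebra_1 \<Rightarrow> 'a" where
  "perp p = 1 - p"

definition pmeet :: "'a::real_algebra_1 set \<Rightarrow> 'a set \<Rightarrow> 'a \<Rightarrow> 'a \<Rightarrow> 'a" where
  "pmeet A Apos p q = (THE r. r \<in> projections A \<and> sa_le Apos r p \<and> sa_le Apos r q \<and>
      (\<forall>s\<in>projections A. sa_le Apos s p \<and> sa_le Apos s q \<longrightarrow> sa_le Apos s r))"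

definition pjoin :: "'a::real_algebra_1 set \<Rightarrow> 'a set \<Rightarrow> 'a \<Rightarrow> 'a \<Rightarrow> 'a" where
  "pjoin A Apos p q = (THE r. r \<in> projections A \<and> sa_le Apos p r \<and> sa_le Apos q r \<and>
      (\<forall>s\<in>projections A. sa_le Apos p s \<and> sa_le Apos q s \<longrightarrow> sa_le Apos r s))"

end

theory Submission
  imports Defs
begin

text \<open>In a synaptic algebra the order on projections is read off products: \<open>e \<le> f\<close> iff
  \<open>ef = fe = e\<close>. Consequently commuting projections meet in their product, and the four
  corners \<open>p \<and> q\<close>, \<open>p \<and> q\<^sup>\<perp>\<close>, \<open>p\<^sup>\<perp> \<and> q\<close>, \<open>p\<^sup>\<perp> \<and> q\<^sup>\<perp>\<close> are pairwise orthogonal projections.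
  By De Morgan each join in the definitions of \<open>r\<^sub>p\<close>, \<dots>, \<open>r\<close> is the complement of a corner,
  and meeting a projection with the complement of a smaller one subtracts it. Hence
  \<open>r = 1 - (p \<and> q) - (p \<and> q\<^sup>\<perp>) - (p\<^sup>\<perp> \<and> q) - (p\<^sup>\<perp> \<and> q\<^sup>\<perp>)\<close>, \<open>r\<^sub>p = p - (p \<and> q) - (p \<and> q\<^sup>\<perp>)\<close>, and
  similarly for the other three, after which every claim is a ring identity among these
  orthogonal idempotents.\<close>

locale synaptic =
  fixes A Apos :: "'a::real_algebra_1 set"
  assumes synaptic: "synaptic_algebra A Apos"
begin

abbreviation "P \<equiv> projections A"
abbreviation "le \<equiv> sa_le Apos"
abbreviation "meet \<equiv> pmeet A Apos"
abbreviation "join \<equiv> pjoin A Apos"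

lemma one_mem: "1 \<in> A"
  using synaptic unfolding synaptic_algebra_def by simp

lemma add_mem: "a \<in> A \<Longrightarrow> b \<in> A \<Longrightarrow> a + b \<in> A"
  using synaptic unfolding synaptic_algebra_def by simp

lemma scale_mem: "a \<in> A \<Longrightarrow> c *\<^sub>R a \<in> A"
  using synaptic unfolding synaptic_algebra_def by simp

lemma diff_mem: "a \<in> A \<Longrightarrow> b \<in> A \<Longrightarrow> a - b \<in> A"
  using add_mem scale_mem[of b "-1"] by fastforce

lemma pos_subset: "Apos \<subseteq> A"
  using synaptic unfolding synaptic_algebra_def by simp

lemma pos_antisym: "a \<in> Apos \<Longrightarrow> - a \<in> Apos \<Longrightarrow> a = 0"
  using synaptic unfolding synaptic_algebra_def by simp

lemma pos_sum_eq_zero: "a \<in> Apos \<Longrightarrow> b \<in> Apos \<Longrightarrow> a + b = 0 \<Longrightarrow> a = 0 \<and> b = 0"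
  using pos_antisym[of a] by (simp add: add_eq_0_iff2)

lemma square_pos: "a \<in> A \<Longrightarrow> a * a \<in> Apos"
  using synaptic unfolding synaptic_algebra_def by simp

lemma sandwich_pos: "a \<in> Apos \<Longrightarrow> b \<in> Apos \<Longrightarrow> a * b * a \<in> Apos"
  using synaptic unfolding synaptic_algebra_def by simp

lemma sandwich_zero: "a \<in> A \<Longrightarrow> b \<in> Apos \<Longrightarrow> a * b * a = 0 \<Longrightarrow> a * b = 0 \<and> b * a = 0"
  using synaptic unfolding synaptic_algebra_def by simp

lemma annihilator_projection:
  "a \<in> A \<Longrightarrow> \<exists>p\<in>A. p * p = p \<and> (\<forall>b\<in>A. a * b = 0 \<longleftrightarrow> p * b = 0)"
  using synaptic unfolding synaptic_algebra_def by simp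

lemma projections_iff: "p \<in> P \<longleftrightarrow> p \<in> A \<and> p * p = p"
  unfolding projections_def by blast

lemma projection_pos: "p \<in> P \<Longrightarrow> p \<in> Apos"
  using square_pos projections_iff by metis

lemma perp_projection: "p \<in> P \<Longrightarrow> perp p \<in> P"
  unfolding projections_iff perp_def using one_mem diff_mem by (auto simp: algebra_simps)

lemma perp_perp [simp]: "perp (perp x) = x"
  unfolding perp_def by simp

lemma le_perp_perp_iff: "le (perp y) (perp x) \<longleftrightarrow> le x y"
  unfolding sa_le_def perp_def by simp

lemma le_antisym: "le x y \<Longrightarrow> le y x \<Longrightarrow> x = y"
  unfolding sa_le_def using pos_antisym[of "y - x"] by simp

text \<open>The forward direction compresses \<open>q - p \<ge> 0\<close> by \<open>q\<^sup>\<perp>\<close> to get \<open>-q\<^sup>\<perp>pq\<^sup>\<perp> \<ge> 0\<close>,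
  and then SA4 kills \<open>pq\<^sup>\<perp>\<close> and \<open>q\<^sup>\<perp>p\<close>.\<close>

lemma le_projection_iff:
  assumes p: "p \<in> P" and q: "q \<in> P"
  shows "le p q \<longleftrightarrow> p * q = p \<and> q * p = p"
proof
  assume "le p q"
  define u where "u = 1 - q"
  have u_pos: "u \<in> Apos"
    using projection_pos perp_projection[OF q] unfolding u_def perp_def by simp
  have p_pos: "p \<in> Apos" using projection_pos p by blast
  have "u * q = 0" unfolding u_def using q by (simp add: projections_iff algebra_simps)
  then have "u * (q - p) * u = - (u * p * u)" by (simp add: algebra_simps)
  moreover have "u * (q - p) * u \<in> Apos" using sandwich_pos[OF u_pos] \<open>le p q\<close>
    unfolding sa_le_def by blast
  ultimately have "u * p * u = 0" using pos_antisym sandwich_pos[OF u_pos p_pos] by metis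
  then have "u * p = 0 \<and> p * u = 0" using sandwich_zero u_pos p_pos pos_subset by blast
  then show "p * q = p \<and> q * p = p" unfolding u_def by (simp add: algebra_simps)
next
  assume "p * q = p \<and> q * p = p"
  then have "(q - p) * (q - p) = q - p" using p q by (simp add: projections_iff algebra_simps)
  moreover have "(q - p) * (q - p) \<in> Apos" using square_pos diff_mem p q projections_iff by metis
  ultimately show "le p q" unfolding sa_le_def by simp
qed

lemma le_perp_iff:
  assumes "e \<in> P" and "p \<in> P"
  shows "le e (perp p) \<longleftrightarrow> e * p = 0 \<and> p * e = 0"
  using le_projection_iff[OF assms(1) perp_projection[OF assms(2)]] assms
  by (auto simp: perp_def algebra_simps projections_iff)

lemma le_perp_orthogonal:
  assumes "x \<in> P" "y \<in> P" "z \<in> P" "le x y" "le z (perp y)"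
  shows "x * z = 0 \<and> z * x = 0"
proof -
  have "x = x * y" "y * x = x" "z * y = 0" "y * z = 0"
    using assms le_projection_iff le_perp_iff by auto
  then have "x * z = x * (y * z)" and "z * x = (z * y) * x"
    by (metis mult.assoc)+
  then show ?thesis using \<open>z * y = 0\<close> \<open>y * z = 0\<close> by simp
qed

text \<open>The join of \<open>e\<close> and \<open>f\<close> is the projection of SA6 with the annihilator of \<open>e + f\<close>.\<close>

lemma join_exists:
  assumes e: "e \<in> P" and f: "f \<in> P"
  shows "\<exists>g\<in>P. le e g \<and> le f g \<and> (\<forall>s\<in>P. le e s \<and> le f s \<longrightarrow> le g s)"
proof -
  have eA: "e \<in> A" and fA: "f \<in> A" using e f projections_iff by auto
  have e_pos: "e \<in> Apos" and f_pos: "f \<in> Apos" using e f projection_pos by auto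
  obtain g where gA: "g \<in> A" and gg: "g * g = g"
    and ann: "\<forall>b\<in>A. (e + f) * b = 0 \<longleftrightarrow> g * b = 0"
    using annihilator_projection[OF add_mem[OF eA fA]] by blast
  have g: "g \<in> P" using gA gg projections_iff by blast
  have below_g: "le x g" if x: "x \<in> P" "x \<in> Apos" and xg: "(1 - g) * x * (1 - g) = 0" for x
  proof -
    have "(1 - g) * x = 0 \<and> x * (1 - g) = 0"
      using sandwich_zero[OF diff_mem[OF one_mem gA] \<open>x \<in> Apos\<close> xg] .
    then show ?thesis using le_projection_iff[OF \<open>x \<in> P\<close> g] by (simp add: algebra_simps)
  qed
  have ug_pos: "1 - g \<in> Apos"
    using projection_pos perp_projection[OF g] unfolding perp_def by simp
  have "g * (1 - g) = 0" using gg by (simp add: algebra_simps)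
  then have "(e + f) * (1 - g) = 0" using ann diff_mem[OF one_mem gA] by blast
  moreover have "(1 - g) * e * (1 - g) + (1 - g) * f * (1 - g) = (1 - g) * ((e + f) * (1 - g))"
    by (simp add: algebra_simps)
  ultimately have "(1 - g) * e * (1 - g) + (1 - g) * f * (1 - g) = 0" by simp
  moreover have "(1 - g) * e * (1 - g) \<in> Apos" "(1 - g) * f * (1 - g) \<in> Apos"
    using sandwich_pos[OF ug_pos] e_pos f_pos by auto
  ultimately have "(1 - g) * e * (1 - g) = 0" "(1 - g) * f * (1 - g) = 0"
    using pos_sum_eq_zero by blast+
  then have "le e g" "le f g" using below_g e f e_pos f_pos by auto
  moreover have "le g s" if s: "s \<in> P" and "le e s" "le f s" for s
  proof -
    have sA: "s \<in> A" using s projections_iff by blast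
    have "e * s = e" "f * s = f" using that le_projection_iff e f by auto
    then have "(e + f) * (1 - s) = 0" by (simp add: algebra_simps)
    then have "(1 - s) * g * (1 - s) = 0"
      using ann diff_mem[OF one_mem sA] by (simp add: mult.assoc)
    then have "(1 - s) * g = 0 \<and> g * (1 - s) = 0"
      using sandwich_zero[OF diff_mem[OF one_mem sA] projection_pos[OF g]] by blast
    then show ?thesis using le_projection_iff[OF g s] by (simp add: algebra_simps)
  qed
  ultimately show ?thesis using g by blast
qed

lemma join_props:
  assumes "e \<in> P" and "f \<in> P"
  shows "join e f \<in> P \<and> le e (join e f) \<and> le f (join e f) \<and>
    (\<forall>s\<in>P. le e s \<and> le f s \<longrightarrow> le (join e f) s)"
proof -
  obtain g where g: "g \<in> P" "le e g \<and> le f g \<and> (\<forall>s\<in>P. le e s \<and> le f s \<longrightarrow> le g s)"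
    using join_exists[OF assms] by blast
  have "join e f = g"
    unfolding pjoin_def by (rule the_equality) (use g le_antisym in blast)+
  then show ?thesis using g by simp
qed

lemma meet_eqI:
  assumes "g \<in> P" "le g e" "le g f" "\<forall>s\<in>P. le s e \<and> le s f \<longrightarrow> le s g"
  shows "meet e f = g"
  unfolding pmeet_def by (rule the_equality) (use assms le_antisym in blast)+

lemma meet_eq_perp_join_perp:
  assumes e: "e \<in> P" and f: "f \<in> P"
  shows "meet e f = perp (join (perp e) (perp f))"
proof (rule meet_eqI)
  let ?j = "join (perp e) (perp f)"
  have j: "?j \<in> P" "le (perp e) ?j" "le (perp f) ?j"
    "\<forall>s\<in>P. le (perp e) s \<and> le (perp f) s \<longrightarrow> le ?j s"
    using join_props[OF perp_projection[OF e] perp_projection[OF f]] by auto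
  show "perp ?j \<in> P" using j perp_projection by blast
  show "le (perp ?j) e" "le (perp ?j) f"
    using j le_perp_perp_iff[of ?j "perp e"] le_perp_perp_iff[of ?j "perp f"] by simp_all
  show "\<forall>s\<in>P. le s e \<and> le s f \<longrightarrow> le s (perp ?j)"
    using j perp_projection le_perp_perp_iff by (metis perp_perp)
qed

lemma meet_projection: "e \<in> P \<Longrightarrow> f \<in> P \<Longrightarrow> meet e f \<in> P"
  using meet_eq_perp_join_perp join_props perp_projection by metis

lemma meet_le:
  assumes "e \<in> P" and "f \<in> P"
  shows "le (meet e f) e" and "le (meet e f) f"
  using meet_eq_perp_join_perp[OF assms] join_props[OF perp_projection[OF assms(1)]
      perp_projection[OF assms(2)]] le_perp_perp_iff perp_perp
  by metis+

lemma join_eq_perp_meet_perp: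
  "e \<in> P \<Longrightarrow> f \<in> P \<Longrightarrow> join e f = perp (meet (perp e) (perp f))"
  using meet_eq_perp_join_perp[OF perp_projection perp_projection] by simp

lemma commuting_projections_product:
  assumes e: "e \<in> P" and f: "f \<in> P" and ef: "e * f = f * e"
  shows "e * f \<in> P"
proof -
  have ee: "e * e = e" and ff: "f * f = f" using e f projections_iff by auto
  have "e * f * e = e * f" using ee ef by (metis mult.assoc)
  moreover have "e * f * e \<in> Apos" using sandwich_pos projection_pos e f by blast
  moreover have "e * f * (e * f) = e * f" using ee ff ef by (metis mult.assoc)
  ultimately show ?thesis using pos_subset projections_iff by auto
qed

lemma meet_commuting:
  assumes e: "e \<in> P" and f: "f \<in> P" and ef: "e * f = f * e"
  shows "meet e f = e * f"
proof (rule meet_eqI)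
  have ee: "e * e = e" and ff: "f * f = f" using e f projections_iff by auto
  show ef_P: "e * f \<in> P" using commuting_projections_product[OF assms] .
  have "e * f * e = e * f" "e * (e * f) = e * f" "e * f * f = e * f" "f * (e * f) = e * f"
    using ee ff ef by (metis mult.assoc)+
  then show "le (e * f) e" "le (e * f) f"
    using le_projection_iff[OF ef_P e] le_projection_iff[OF ef_P f] by simp_all
  show "\<forall>s\<in>P. le s e \<and> le s f \<longrightarrow> le s (e * f)"
  proof (intro ballI impI)
    fix s assume s: "s \<in> P" and "le s e \<and> le s f"
    then have "s * e = s" "e * s = s" "s * f = s" "f * s = s" using le_projection_iff e f by auto
    then show "le s (e * f)" using le_projection_iff[OF s ef_P] by (metis mult.assoc)
  qed
qed

lemma meet_perp_of_le:
  assumes x: "x \<in> P" and y: "y \<in> P" and "le y x"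
  shows "meet x (perp y) = x - y" and "x - y \<in> P"
proof -
  have "x * y = y" "y * x = y" "y * y = y"
    using assms le_projection_iff projections_iff by auto
  then have "x * perp y = x - y" "perp y * x = x - y"
    unfolding perp_def by (simp_all add: algebra_simps)
  then show "meet x (perp y) = x - y" "x - y \<in> P"
    using meet_commuting commuting_projections_product x perp_projection[OF y] by metis+
qed

lemma meet_perp_perp_of_le:
  assumes x: "x \<in> P" and y: "y \<in> P" and z: "z \<in> P" and "le y x" "le z x"
    and yz: "y * z = 0" "z * y = 0"
  shows "meet (meet x (perp y)) (perp z) = x - y - z" and "x - y - z \<in> P"
proof -
  have d: "meet x (perp y) = x - y" "x - y \<in> P" using meet_perp_of_le[OF x y \<open>le y x\<close>] .
  have "z * x = z" "x * z = z" using le_projection_iff[OF z x] \<open>le z x\<close> by auto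
  then have "le z (x - y)" using le_projection_iff[OF z d(2)] yz by (simp add: algebra_simps)
  then show "meet (meet x (perp y)) (perp z) = x - y - z" "x - y - z \<in> P"
    using meet_perp_of_le[OF d(2) z] d(1) by simp_all
qed

end

text \<open>Corners of a pair of projections; the subscripts \<open>0\<close>, \<open>1\<close> select \<open>p\<^sup>\<perp>, p\<close> and \<open>q\<^sup>\<perp>, q\<close>.\<close>

locale projection_pair = synaptic +
  fixes p q :: 'a
  assumes p: "p \<in> projections A" and q: "q \<in> projections A"
begin

definition "c\<^sub>1\<^sub>1 = meet p q"
definition "c\<^sub>1\<^sub>0 = meet p (perp q)"
definition "c\<^sub>0\<^sub>1 = meet (perp p) q"
definition "c\<^sub>0\<^sub>0 = meet (perp p) (perp q)"

lemma corner_projections: "c\<^sub>1\<^sub>1 \<in> P" "c\<^sub>1\<^sub>0 \<in> P" "c\<^sub>0\<^sub>1 \<in> P" "c\<^sub>0\<^sub>0 \<in> P"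
  unfolding c\<^sub>1\<^sub>1_def c\<^sub>1\<^sub>0_def c\<^sub>0\<^sub>1_def c\<^sub>0\<^sub>0_def
  using meet_projection p q perp_projection by auto

lemma corner_le:
  "le c\<^sub>1\<^sub>1 p" "le c\<^sub>1\<^sub>1 q" "le c\<^sub>1\<^sub>0 p" "le c\<^sub>1\<^sub>0 (perp q)"
  "le c\<^sub>0\<^sub>1 (perp p)" "le c\<^sub>0\<^sub>1 q" "le c\<^sub>0\<^sub>0 (perp p)" "le c\<^sub>0\<^sub>0 (perp q)"
  unfolding c\<^sub>1\<^sub>1_def c\<^sub>1\<^sub>0_def c\<^sub>0\<^sub>1_def c\<^sub>0\<^sub>0_def
  using meet_le p q perp_projection by auto

lemma corner_products:
  "p * p = p" "q * q = q"
  "c\<^sub>1\<^sub>1 * c\<^sub>1\<^sub>1 = c\<^sub>1\<^sub>1" "c\<^sub>1\<^sub>0 * c\<^sub>1\<^sub>0 = c\<^sub>1\<^sub>0" "c\<^sub>0\<^sub>1 * c\<^sub>0\<^sub>1 = c\<^sub>0\<^sub>1" "c\<^sub>0\<^sub>0 * c\<^sub>0\<^sub>0 = c\<^sub>0\<^sub>0"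
  "p * c\<^sub>1\<^sub>1 = c\<^sub>1\<^sub>1" "c\<^sub>1\<^sub>1 * p = c\<^sub>1\<^sub>1" "q * c\<^sub>1\<^sub>1 = c\<^sub>1\<^sub>1" "c\<^sub>1\<^sub>1 * q = c\<^sub>1\<^sub>1"
  "p * c\<^sub>1\<^sub>0 = c\<^sub>1\<^sub>0" "c\<^sub>1\<^sub>0 * p = c\<^sub>1\<^sub>0" "q * c\<^sub>1\<^sub>0 = 0" "c\<^sub>1\<^sub>0 * q = 0"
  "p * c\<^sub>0\<^sub>1 = 0" "c\<^sub>0\<^sub>1 * p = 0" "q * c\<^sub>0\<^sub>1 = c\<^sub>0\<^sub>1" "c\<^sub>0\<^sub>1 * q = c\<^sub>0\<^sub>1"
  "p * c\<^sub>0\<^sub>0 = 0" "c\<^sub>0\<^sub>0 * p = 0" "q * c\<^sub>0\<^sub>0 = 0" "c\<^sub>0\<^sub>0 * q = 0"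
  "c\<^sub>1\<^sub>1 * c\<^sub>1\<^sub>0 = 0" "c\<^sub>1\<^sub>0 * c\<^sub>1\<^sub>1 = 0" "c\<^sub>1\<^sub>1 * c\<^sub>0\<^sub>1 = 0" "c\<^sub>0\<^sub>1 * c\<^sub>1\<^sub>1 = 0"
  "c\<^sub>1\<^sub>1 * c\<^sub>0\<^sub>0 = 0" "c\<^sub>0\<^sub>0 * c\<^sub>1\<^sub>1 = 0" "c\<^sub>1\<^sub>0 * c\<^sub>0\<^sub>1 = 0" "c\<^sub>0\<^sub>1 * c\<^sub>1\<^sub>0 = 0"
  "c\<^sub>1\<^sub>0 * c\<^sub>0\<^sub>0 = 0" "c\<^sub>0\<^sub>0 * c\<^sub>1\<^sub>0 = 0" "c\<^sub>0\<^sub>1 * c\<^sub>0\<^sub>0 = 0" "c\<^sub>0\<^sub>0 * c\<^sub>0\<^sub>1 = 0"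
proof -
  note c = corner_projections and le = corner_le
  show "p * p = p" "q * q = q" "c\<^sub>1\<^sub>1 * c\<^sub>1\<^sub>1 = c\<^sub>1\<^sub>1" "c\<^sub>1\<^sub>0 * c\<^sub>1\<^sub>0 = c\<^sub>1\<^sub>0"
    "c\<^sub>0\<^sub>1 * c\<^sub>0\<^sub>1 = c\<^sub>0\<^sub>1" "c\<^sub>0\<^sub>0 * c\<^sub>0\<^sub>0 = c\<^sub>0\<^sub>0"
    using p q c projections_iff by auto
  show "p * c\<^sub>1\<^sub>1 = c\<^sub>1\<^sub>1" "c\<^sub>1\<^sub>1 * p = c\<^sub>1\<^sub>1" "q * c\<^sub>1\<^sub>1 = c\<^sub>1\<^sub>1" "c\<^sub>1\<^sub>1 * q = c\<^sub>1\<^sub>1"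
    "p * c\<^sub>1\<^sub>0 = c\<^sub>1\<^sub>0" "c\<^sub>1\<^sub>0 * p = c\<^sub>1\<^sub>0" "q * c\<^sub>0\<^sub>1 = c\<^sub>0\<^sub>1" "c\<^sub>0\<^sub>1 * q = c\<^sub>0\<^sub>1"
    using le_projection_iff[OF c(1) p] le_projection_iff[OF c(1) q] le_projection_iff[OF c(2) p]
      le_projection_iff[OF c(3) q] le(1,2,3,6) by simp_all
  show "q * c\<^sub>1\<^sub>0 = 0" "c\<^sub>1\<^sub>0 * q = 0" "p * c\<^sub>0\<^sub>1 = 0" "c\<^sub>0\<^sub>1 * p = 0"
    "p * c\<^sub>0\<^sub>0 = 0" "c\<^sub>0\<^sub>0 * p = 0" "q * c\<^sub>0\<^sub>0 = 0" "c\<^sub>0\<^sub>0 * q = 0"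
    using le_perp_iff[OF c(2) q] le_perp_iff[OF c(3) p] le_perp_iff[OF c(4) p]
      le_perp_iff[OF c(4) q] le(4,5,7,8) by simp_all
  show "c\<^sub>1\<^sub>1 * c\<^sub>1\<^sub>0 = 0" "c\<^sub>1\<^sub>0 * c\<^sub>1\<^sub>1 = 0" "c\<^sub>0\<^sub>1 * c\<^sub>0\<^sub>0 = 0" "c\<^sub>0\<^sub>0 * c\<^sub>0\<^sub>1 = 0"
    using le_perp_orthogonal[OF c(1) q c(2) le(2,4)] le_perp_orthogonal[OF c(3) q c(4) le(6,8)]
    by auto
  show "c\<^sub>1\<^sub>1 * c\<^sub>0\<^sub>1 = 0" "c\<^sub>0\<^sub>1 * c\<^sub>1\<^sub>1 = 0" "c\<^sub>1\<^sub>1 * c\<^sub>0\<^sub>0 = 0" "c\<^sub>0\<^sub>0 * c\<^sub>1\<^sub>1 = 0"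
    "c\<^sub>1\<^sub>0 * c\<^sub>0\<^sub>1 = 0" "c\<^sub>0\<^sub>1 * c\<^sub>1\<^sub>0 = 0" "c\<^sub>1\<^sub>0 * c\<^sub>0\<^sub>0 = 0" "c\<^sub>0\<^sub>0 * c\<^sub>1\<^sub>0 = 0"
    using le_perp_orthogonal[OF c(1) p c(3) le(1,5)] le_perp_orthogonal[OF c(1) p c(4) le(1,7)]
      le_perp_orthogonal[OF c(2) p c(3) le(3,5)] le_perp_orthogonal[OF c(2) p c(4) le(3,7)]
    by auto
qed

lemma join_eq_perp_corner:
  "join p q = perp c\<^sub>0\<^sub>0" "join p (perp q) = perp c\<^sub>0\<^sub>1"
  "join (perp p) q = perp c\<^sub>1\<^sub>0" "join (perp p) (perp q) = perp c\<^sub>1\<^sub>1"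
  unfolding c\<^sub>1\<^sub>1_def c\<^sub>1\<^sub>0_def c\<^sub>0\<^sub>1_def c\<^sub>0\<^sub>0_def
  using join_eq_perp_meet_perp p q perp_projection by auto

lemma rp_eq: "meet (meet p (join (perp p) q)) (join (perp p) (perp q)) = p - c\<^sub>1\<^sub>0 - c\<^sub>1\<^sub>1"
  using meet_perp_perp_of_le[OF p corner_projections(2,1) corner_le(3,1)] corner_products
  by (simp add: join_eq_perp_corner)

lemma rpp_eq: "meet (meet (perp p) (join p q)) (join p (perp q)) = perp p - c\<^sub>0\<^sub>0 - c\<^sub>0\<^sub>1"
  using meet_perp_perp_of_le[OF perp_projection[OF p] corner_projections(4,3) corner_le(7,5)]
    corner_products
  by (simp add: join_eq_perp_corner)

lemma rq_eq: "meet (meet q (join p (perp q))) (join (perp p) (perp q)) = q - c\<^sub>0\<^sub>1 - c\<^sub>1\<^sub>1"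
  using meet_perp_perp_of_le[OF q corner_projections(3,1) corner_le(6,2)] corner_products
  by (simp add: join_eq_perp_corner)

lemma rqp_eq: "meet (meet (perp q) (join p q)) (join (perp p) q) = perp q - c\<^sub>0\<^sub>0 - c\<^sub>1\<^sub>0"
  using meet_perp_perp_of_le[OF perp_projection[OF q] corner_projections(4,2) corner_le(8,4)]
    corner_products
  by (simp add: join_eq_perp_corner)

definition "commutator = 1 - c\<^sub>0\<^sub>0 - c\<^sub>0\<^sub>1 - c\<^sub>1\<^sub>0 - c\<^sub>1\<^sub>1"

lemma commutator_eq:
  "meet (meet (meet (join p q) (join p (perp q))) (join (perp p) q)) (join (perp p) (perp q))
    = commutator" (is ?eq)
  and commutator_projection: "commutator \<in> P"
proof -
  note c = corner_projections
  have "le c\<^sub>0\<^sub>1 (perp c\<^sub>0\<^sub>0)" using le_perp_iff[OF c(3,4)] corner_products by simp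
  then have x: "meet (perp c\<^sub>0\<^sub>0) (perp c\<^sub>0\<^sub>1) = perp c\<^sub>0\<^sub>0 - c\<^sub>0\<^sub>1" "perp c\<^sub>0\<^sub>0 - c\<^sub>0\<^sub>1 \<in> P"
    using meet_perp_of_le[OF perp_projection c(3)] c(4) by auto
  have "le c\<^sub>1\<^sub>0 (perp c\<^sub>0\<^sub>0 - c\<^sub>0\<^sub>1)" "le c\<^sub>1\<^sub>1 (perp c\<^sub>0\<^sub>0 - c\<^sub>0\<^sub>1)"
    using le_projection_iff[OF c(2) x(2)] le_projection_iff[OF c(1) x(2)] corner_products
    by (simp_all add: perp_def algebra_simps)
  from meet_perp_perp_of_le[OF x(2) c(2,1) this] corner_products
  show ?eq "commutator \<in> P"
    unfolding join_eq_perp_corner x(1) by (simp_all add: commutator_def perp_def)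
qed

lemma commutator_products:
  "p * commutator = p - c\<^sub>1\<^sub>0 - c\<^sub>1\<^sub>1" "commutator * p = p - c\<^sub>1\<^sub>0 - c\<^sub>1\<^sub>1"
  "perp p * commutator = perp p - c\<^sub>0\<^sub>0 - c\<^sub>0\<^sub>1" "commutator * perp p = perp p - c\<^sub>0\<^sub>0 - c\<^sub>0\<^sub>1"
  "q * commutator = q - c\<^sub>0\<^sub>1 - c\<^sub>1\<^sub>1" "commutator * q = q - c\<^sub>0\<^sub>1 - c\<^sub>1\<^sub>1"
  "perp q * commutator = perp q - c\<^sub>0\<^sub>0 - c\<^sub>1\<^sub>0" "commutator * perp q = perp q - c\<^sub>0\<^sub>0 - c\<^sub>1\<^sub>0"
  using corner_products by (simp_all add: commutator_def perp_def algebra_simps)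

lemma meet_commutator:
  "meet p commutator = p - c\<^sub>1\<^sub>0 - c\<^sub>1\<^sub>1" "meet (perp p) commutator = perp p - c\<^sub>0\<^sub>0 - c\<^sub>0\<^sub>1"
  "meet q commutator = q - c\<^sub>0\<^sub>1 - c\<^sub>1\<^sub>1" "meet (perp q) commutator = perp q - c\<^sub>0\<^sub>0 - c\<^sub>1\<^sub>0"
  using meet_commuting[OF p commutator_projection] meet_commuting[OF q commutator_projection]
    meet_commuting[OF perp_projection[OF p] commutator_projection]
    meet_commuting[OF perp_projection[OF q] commutator_projection]
  by (simp_all add: commutator_products)

lemma commute_iff_commutator_eq_0: "p * q = q * p \<longleftrightarrow> commutator = 0"
proof
  assume pq: "p * q = q * p"
  then have "p * perp q = perp q * p" "perp p * q = q * perp p" "perp p * perp q = perp q * perp p"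
    by (simp_all add: perp_def algebra_simps)
  with pq have "commutator = 1 - perp p * perp q - perp p * q - p * perp q - p * q"
    unfolding commutator_def c\<^sub>1\<^sub>1_def c\<^sub>1\<^sub>0_def c\<^sub>0\<^sub>1_def c\<^sub>0\<^sub>0_def
    using meet_commuting p q perp_projection by simp
  then show "commutator = 0" by (simp add: perp_def algebra_simps)
next
  assume "commutator = 0"
  then have "p = c\<^sub>1\<^sub>0 + c\<^sub>1\<^sub>1" using commutator_products(1) by (simp add: algebra_simps)
  then have "p * q = c\<^sub>1\<^sub>0 * q + c\<^sub>1\<^sub>1 * q" "q * p = q * c\<^sub>1\<^sub>0 + q * c\<^sub>1\<^sub>1"
    \<comment> \<open>not by simp: the corners mention \<open>p\<close>, so rewriting with \<open>p = \<dots>\<close> loops\<close>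
    by (metis distrib_right, metis distrib_left)
  then show "p * q = q * p" by (simp add: corner_products)
qed

end

theorem theorem3p8:
  fixes A Apos :: "'a::real_algebra_1 set" and p q :: 'a
  assumes SA: "synaptic_algebra A Apos"
    and hp: "p \<in> projections A" and hq: "q \<in> projections A"
  defines "M \<equiv> pmeet A Apos" and "J \<equiv> pjoin A Apos"
  defines "rp \<equiv> M (M p (J (perp p) q)) (J (perp p) (perp q))"
    and "rpp \<equiv> M (M (perp p) (J p q)) (J p (perp q))"
    and "rq \<equiv> M (M q (J p (perp q))) (J (perp p) (perp q))"
    and "rqp \<equiv> M (M (perp q) (J p q)) (J (perp p) q)"
    and "r \<equiv> M (M (M (J p q) (J p (perp q))) (J (perp p) q)) (J (perp p) (perp q))"
  shows
    \<comment> \<open>parenthetical: r = r_p \<oplus> r_p' = r_q \<oplus> r_q'\<close>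
    "(r = rp + rpp \<and> rp * rpp = 0 \<and> r = rq + rqp \<and> rq * rqp = 0) \<and>
     \<comment> \<open>(i)\<close>
     (p * q = q * p \<longleftrightarrow> r = 0) \<and>
     \<comment> \<open>(ii)\<close>
     (p * rp = rp \<and> rp * p = rp \<and> p * rpp = 0 \<and> rpp * p = 0 \<and>
      p * r = rp \<and> r * p = rp \<and> M p r = rp) \<and>
     \<comment> \<open>(iii)\<close>
     (perp p * rp = 0 \<and> rp * perp p = 0 \<and> perp p * rpp = rpp \<and> rpp * perp p = rpp \<and>
      perp p * r = rpp \<and> r * perp p = rpp \<and> M (perp p) r = rpp) \<and>
     \<comment> \<open>(iv)\<close>
     (q * rq = rq \<and> rq * q = rq \<and> q * rqp = 0 \<and> rqp * q = 0 \<and>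
      q * r = rq \<and> r * q = rq \<and> M q r = rq) \<and>
     \<comment> \<open>(v)\<close>
     (perp q * rq = 0 \<and> rq * perp q = 0 \<and> perp q * rqp = rqp \<and> rqp * perp q = rqp \<and>
      perp q * r = rqp \<and> r * perp q = rqp \<and> M (perp q) r = rqp) \<and>
     \<comment> \<open>(vi)\<close>
     (p * r = r * p \<and> perp p * r = r * perp p \<and> q * r = r * q \<and> perp q * r = r * perp q) \<and>
     \<comment> \<open>(vii)\<close>
     (rp * r = r * rp \<and> rpp * r = r * rpp \<and> perp rp * r = r * perp rp \<and>
      rq * r = r * rq \<and> rqp * r = r * rqp \<and> perp rq * r = r * perp rq) \<and>
     \<comment> \<open>(viii)\<close>
     (rp = M p r \<and> rp = p * r \<and> rp = r * p \<and>
      rpp = M (perp p) r \<and> rpp = perp p * r \<and> rpp = r * perp p \<and>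
      rq = M q r \<and> rq = q * r \<and> rq = r * q \<and>
      rqp = M (perp q) r \<and> rqp = perp q * r \<and> rqp = r * perp q)"
proof -
  interpret projection_pair A Apos p q
    by unfold_locales (rule SA hp hq)+
  have r: "r = commutator" "rp = p - c\<^sub>1\<^sub>0 - c\<^sub>1\<^sub>1" "rpp = perp p - c\<^sub>0\<^sub>0 - c\<^sub>0\<^sub>1"
    "rq = q - c\<^sub>0\<^sub>1 - c\<^sub>1\<^sub>1" "rqp = perp q - c\<^sub>0\<^sub>0 - c\<^sub>1\<^sub>0"
    unfolding r_def rp_def rpp_def rq_def rqp_def M_def J_def
    using commutator_eq rp_eq rpp_eq rq_eq rqp_eq by simp_all
  show ?thesis
    unfolding r M_def
    using commute_iff_commutator_eq_0 commutator_products meet_commutator corner_products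
    by (simp add: commutator_def perp_def algebra_simps)
qed

end
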